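(* Let $G$ be a connected graph, $S$ a separating vertex set of $G$, and $V_1,\ldots,V_k$ the vertex sets of the connected components of $G-S$. Suppose each vertex of $S$ has a neighbor in each $V_i$, $1\leq i\leq k$. Then every connected forcing set of $G$ contains a vertex from at least $k-1$ of the sets $V_1,\ldots,V_k$. Moreover, if either $k=2$ and $Z(G[V_i])>|S|$ for both $i\in\{1,2\}$, or $k\geq 3$, then every connected forcing set of $G$ contains a vertex of $S$.
   Context: Zero forcing: given a graph $H$ and a set $T$ of initially colored vertices, if a colored vertex $u$ has exactly one uncolored neighbor $v$, then $v$ becomes colored. $T$ is a zero forcing set if repeated application colors all vertices; $Z(H)$ is the minimum size of a zero forcing set of $H$. A connected forcing set is a zero forcing set $T$ with $G[T]$ connected. *)

theory Defs
  imports Main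
begin

text \<open>Induced subgraphs G[W] are represented by
the pair (W, E): all notions below only use edges between vertices of the
given vertex set.\<close>

definition simple_graph :: "'a set \<Rightarrow> ('a \<Rightarrow> 'a \<Rightarrow> bool) \<Rightarrow> bool" where
  "simple_graph V E \<longleftrightarrow> finite V \<and> (\<forall>x y. E x y \<longrightarrow> E y x) \<and> (\<forall>x. \<not> E x x)
     \<and> (\<forall>x y. E x y \<longrightarrow> x \<in> V \<and> y \<in> V)"

definition edges_in :: "'a set \<Rightarrow> ('a \<Rightarrow> 'a \<Rightarrow> bool) \<Rightarrow> ('a \<times> 'a) set" where
  "edges_in W E = {(x, y). x \<in> W \<and> y \<in> W \<and> E x y}"

definition connected_on :: "'a set \<Rightarrow> ('a \<Rightarrow> 'a \<Rightarrow> bool) \<Rightarrow> bool" where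
  "connected_on W E \<longleftrightarrow> W \<noteq> {} \<and> (\<forall>x\<in>W. \<forall>y\<in>W. (x, y) \<in> (edges_in W E)\<^sup>*)"

definition components :: "'a set \<Rightarrow> ('a \<Rightarrow> 'a \<Rightarrow> bool) \<Rightarrow> 'a set set" where
  "components W E = {{y. (x, y) \<in> (edges_in W E)\<^sup>*} | x. x \<in> W}"

definition separating :: "'a set \<Rightarrow> ('a \<Rightarrow> 'a \<Rightarrow> bool) \<Rightarrow> 'a set \<Rightarrow> bool" where
  "separating V E S \<longleftrightarrow> S \<subseteq> V \<and> card (components (V - S) E) \<ge> 2"

text \<open>Final colored set of the zero forcing process in G[W] starting from T:
a colored vertex u all of whose neighbours in W except v are colored forces v.\<close>
inductive_set zf_closure :: "'a set \<Rightarrow> ('a \<Rightarrow> 'a \<Rightarrow> bool) \<Rightarrow> 'a set \<Rightarrow> 'a set"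
  for W E T where
  init: "v \<in> T \<Longrightarrow> v \<in> W \<Longrightarrow> v \<in> zf_closure W E T"
| force: "u \<in> zf_closure W E T \<Longrightarrow> v \<in> W \<Longrightarrow> E u v \<Longrightarrow>
          (\<forall>w\<in>W. E u w \<and> w \<noteq> v \<longrightarrow> w \<in> zf_closure W E T) \<Longrightarrow> v \<in> zf_closure W E T"

definition zero_forcing_set :: "'a set \<Rightarrow> ('a \<Rightarrow> 'a \<Rightarrow> bool) \<Rightarrow> 'a set \<Rightarrow> bool" where
  "zero_forcing_set W E T \<longleftrightarrow> T \<subseteq> W \<and> zf_closure W E T = W"

definition Z :: "'a set \<Rightarrow> ('a \<Rightarrow> 'a \<Rightarrow> bool) \<Rightarrow> nat" where
  "Z W E = Min {card T | T. zero_forcing_set W E T}"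

definition connected_forcing_set :: "'a set \<Rightarrow> ('a \<Rightarrow> 'a \<Rightarrow> bool) \<Rightarrow> 'a set \<Rightarrow> bool" where
  "connected_forcing_set V E T \<longleftrightarrow> zero_forcing_set V E T \<and> connected_on T E"

end

theory Submission
  imports Defs
begin

text \<open>Two components of \<open>G - S\<close> that contain no initially coloured vertex can never
receive a colour: a vertex of \<open>S\<close> adjacent to one of them always has a second
uncoloured neighbour in the other. Hence a zero forcing set meets all but at most one
component. If a connected forcing set \<open>T\<close> avoids \<open>S\<close>, it lies inside a single
component, so by the above there are at most two components, and the other component \<open>C\<close> must be
coloured from outside. The vertices of \<open>C\<close> that are forced by vertices of \<open>S\<close> then form
a zero forcing set of \<open>G[C]\<close>, and since every vertex forces at most once there are at
most \<open>|S|\<close> of them, i.e. \<open>Z(G[C]) \<le> |S|\<close>.\<close>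

lemma rtrancl_edges_in_mem:
  assumes "(x, y) \<in> (edges_in W E)\<^sup>*" "x \<in> W" shows "y \<in> W"
  using assms by (induction rule: rtrancl_induct) (auto simp: edges_in_def)

lemma components_subset: "C \<in> components W E \<Longrightarrow> C \<subseteq> W"
  unfolding components_def using rtrancl_edges_in_mem by fastforce

lemma components_nonempty: "C \<in> components W E \<Longrightarrow> C \<noteq> {}"
  unfolding components_def by auto

lemma components_edge_closed:
  assumes "C \<in> components W E" "x \<in> C" "y \<in> W" "E x y" shows "y \<in> C"
proof -
  from assms(1) obtain x0 where C: "C = {y. (x0, y) \<in> (edges_in W E)\<^sup>*}"
    unfolding components_def by auto
  have "(x, y) \<in> edges_in W E"
    using assms components_subset by (fastforce simp: edges_in_def)
  with assms(2) show ?thesis unfolding C by (auto intro: rtrancl_into_rtrancl)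
qed

lemma components_eq:
  assumes "symp E" "C1 \<in> components W E" "C2 \<in> components W E" "x \<in> C1" "x \<in> C2"
  shows "C1 = C2"
proof -
  let ?R = "edges_in W E"
  have "sym ?R" using assms(1) unfolding symp_def sym_def edges_in_def by auto
  hence sym_R: "sym (?R\<^sup>*)" by (rule sym_rtrancl)
  from assms(2,3) obtain a b where a: "C1 = {y. (a, y) \<in> ?R\<^sup>*}" and b: "C2 = {y. (b, y) \<in> ?R\<^sup>*}"
    unfolding components_def by auto
  have "(a, b) \<in> ?R\<^sup>*" "(b, a) \<in> ?R\<^sup>*"
    using assms(4,5) sym_R unfolding a b by (auto intro: rtrancl_trans dest: symD)
  thus ?thesis unfolding a b by (auto intro: rtrancl_trans)
qed

lemma connected_on_subset_component:
  assumes "connected_on T E" "T \<subseteq> W"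
  obtains C where "C \<in> components W E" "T \<subseteq> C"
proof -
  obtain t where t: "t \<in> T" using assms(1) unfolding connected_on_def by blast
  have "(edges_in T E)\<^sup>* \<subseteq> (edges_in W E)\<^sup>*"
    using assms(2) by (intro rtrancl_mono) (auto simp: edges_in_def)
  hence "T \<subseteq> {y. (t, y) \<in> (edges_in W E)\<^sup>*}"
    using assms(1) t unfolding connected_on_def by blast
  moreover have "{y. (t, y) \<in> (edges_in W E)\<^sup>*} \<in> components W E"
    using t assms(2) unfolding components_def by blast
  ultimately show thesis using that by blast
qed

lemma connected_on_meets_one_component:
  assumes "symp E" "connected_on T E" "T \<subseteq> W"
  obtains C where "{C' \<in> components W E. C' \<inter> T \<noteq> {}} = {C}"
proof -
  obtain C where C: "C \<in> components W E" "T \<subseteq> C"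
    using connected_on_subset_component[OF assms(2,3)] .
  have "T \<noteq> {}" using assms(2) unfolding connected_on_def by blast
  hence "{C' \<in> components W E. C' \<inter> T \<noteq> {}} = {C}"
    using C components_eq[OF assms(1) _ C(1)] by blast
  thus thesis by (rule that)
qed

lemma zf_closure_subset: "zf_closure W E T \<subseteq> W"
proof
  show "v \<in> W" if "v \<in> zf_closure W E T" for v
    using that by induction auto
qed

lemma zf_closure_avoids_uncoloured_components:
  assumes "symp E"
    and adj: "\<forall>s\<in>S. \<forall>C\<in>components (V - S) E. \<exists>v\<in>C. E s v"
    and C1: "C1 \<in> components (V - S) E" and C2: "C2 \<in> components (V - S) E"
    and "C1 \<noteq> C2" and T: "C1 \<inter> T = {}" "C2 \<inter> T = {}"
  shows "zf_closure V E T \<inter> (C1 \<union> C2) = {}"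
proof -
  have "v \<notin> C1 \<union> C2" if "v \<in> zf_closure V E T" for v
    using that
  proof induction
    case (init v)
    then show ?case using T by blast
  next
    case (force u v)
    show ?case
    proof
      assume v: "v \<in> C1 \<union> C2"
      show False
      proof (cases "u \<in> S")
        case False
        have "E v u" using \<open>symp E\<close> \<open>E u v\<close> by (simp add: symp_def)
        moreover have "u \<in> V - S" using force(1) zf_closure_subset[of V E T] False by blast
        ultimately have "u \<in> C1 \<union> C2"
          using v components_edge_closed[OF C1, of v u] components_edge_closed[OF C2, of v u]
          by blast
        thus False using \<open>u \<notin> C1 \<union> C2\<close> by blast
      next
        case True
        obtain C where C: "C \<in> {C1, C2}" "v \<notin> C"
          using components_eq[OF \<open>symp E\<close> C1 C2, of v] \<open>C1 \<noteq> C2\<close> by blast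
        then obtain w where w: "w \<in> C" "E u w" using adj True C1 C2 by blast
        have "w \<in> V" using w(1) C(1) C1 C2 components_subset by blast
        hence "w \<notin> C1 \<union> C2" using force.IH w(2) C(2) w(1) by blast
        thus False using w(1) C(1) by blast
      qed
    qed
  qed
  thus ?thesis by blast
qed

lemma zero_forcing_set_meets_all_but_one_component:
  assumes "symp E"
    and adj: "\<forall>s\<in>S. \<forall>C\<in>components (V - S) E. \<exists>v\<in>C. E s v"
    and "zero_forcing_set V E T"
  shows "card (components (V - S) E) - 1 \<le> card {C \<in> components (V - S) E. C \<inter> T \<noteq> {}}"
proof -
  let ?K = "components (V - S) E"
  let ?M = "{C \<in> ?K. C \<inter> T \<noteq> {}}"
  let ?U = "{C \<in> ?K. C \<inter> T = {}}"
  have unique: "C1 = C2" if C1: "C1 \<in> ?U" and C2: "C2 \<in> ?U" for C1 C2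
  proof (rule ccontr)
    assume "C1 \<noteq> C2"
    obtain x where "x \<in> C1" using C1 components_nonempty by blast
    moreover have "C1 \<subseteq> zf_closure V E T"
      using C1 assms(3) components_subset unfolding zero_forcing_set_def by blast
    moreover have "zf_closure V E T \<inter> (C1 \<union> C2) = {}"
      using C1 C2 \<open>C1 \<noteq> C2\<close> by (intro zf_closure_avoids_uncoloured_components[OF assms(1,2)]) auto
    ultimately show False by blast
  qed
  have "card ?U \<le> Suc 0"
  proof (cases "finite ?U")
    case True
    thus ?thesis using card_le_Suc0_iff_eq[OF True] unique by blast
  qed simp
  moreover have "card ?K \<le> card ?M + card ?U"
  proof -
    have "?M \<union> ?U = ?K" by blast
    thus ?thesis using card_Un_le[of ?M ?U] by argo
  qed
  ultimately show ?thesis by linarith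
qed

definition zf_step :: "'a set \<Rightarrow> ('a \<Rightarrow> 'a \<Rightarrow> bool) \<Rightarrow> 'a set \<Rightarrow> 'a set" where
  "zf_step W E X = X \<union> {v \<in> W. \<exists>u\<in>X. E u v \<and> (\<forall>w\<in>W. E u w \<and> w \<noteq> v \<longrightarrow> w \<in> X)}"

definition zf_stage :: "'a set \<Rightarrow> ('a \<Rightarrow> 'a \<Rightarrow> bool) \<Rightarrow> 'a set \<Rightarrow> nat \<Rightarrow> 'a set" where
  "zf_stage W E T n = (zf_step W E ^^ n) (T \<inter> W)"

definition forces :: "'a set \<Rightarrow> ('a \<Rightarrow> 'a \<Rightarrow> bool) \<Rightarrow> 'a set \<Rightarrow> 'a \<Rightarrow> 'a \<Rightarrow> bool" where
  "forces W E T u v \<longleftrightarrow> v \<in> W \<and> E u v \<and> (\<exists>n. u \<in> zf_stage W E T n \<and> v \<notin> zf_stage W E T n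
     \<and> (\<forall>w\<in>W. E u w \<and> w \<noteq> v \<longrightarrow> w \<in> zf_stage W E T n))"

lemma zf_stage_0: "zf_stage W E T 0 = T \<inter> W"
  by (simp add: zf_stage_def)

lemma zf_stage_Suc: "zf_stage W E T (Suc n) = zf_step W E (zf_stage W E T n)"
  by (simp add: zf_stage_def)

lemma zf_stage_subset: "zf_stage W E T n \<subseteq> W"
  by (induction n) (auto simp: zf_stage_0 zf_stage_Suc zf_step_def)

lemma mono_zf_stage: "mono (zf_stage W E T)"
  unfolding mono_iff_le_Suc by (auto simp: zf_stage_Suc zf_step_def)

lemma finite_subset_UN_mono:
  fixes f :: "nat \<Rightarrow> 'b set"
  assumes "mono f" "finite A" "A \<subseteq> (\<Union>n. f n)"
  obtains n where "A \<subseteq> f n"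
proof -
  have "f m \<subseteq> f n \<or> f n \<subseteq> f m" for m n
    using nat_le_linear[of m n] monoD[OF assms(1)] by blast
  hence "subset.chain UNIV (range f)" by (auto simp: subset_chain_def)
  then obtain B where "B \<in> range f" "A \<subseteq> B"
    using finite_subset_Union_chain[of A "range f" UNIV] assms(2,3) by blast
  thus thesis using that by blast
qed

lemma zf_closure_in_some_stage:
  assumes "finite W" "v \<in> zf_closure W E T"
  shows "\<exists>n. v \<in> zf_stage W E T n"
  using assms(2)
proof induction
  case (init v)
  then show ?case by (auto simp: zf_stage_0 intro: exI[of _ 0])
next
  case (force u v)
  let ?A = "insert u {w \<in> W. E u w \<and> w \<noteq> v}"
  have "finite ?A" using assms(1) by simp
  moreover have "?A \<subseteq> (\<Union>n. zf_stage W E T n)" using force by blast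
  ultimately obtain n where "?A \<subseteq> zf_stage W E T n"
    by (rule finite_subset_UN_mono[OF mono_zf_stage])
  hence "v \<in> zf_step W E (zf_stage W E T n)"
    using force(2,3) unfolding zf_step_def by blast
  thus ?case by (metis zf_stage_Suc)
qed

lemma forces_unique:
  assumes "forces W E T u v1" "forces W E T u v2" shows "v1 = v2"
proof (rule ccontr)
  assume "v1 \<noteq> v2"
  from assms obtain n1 n2 where
    n1: "v1 \<notin> zf_stage W E T n1" "\<forall>w\<in>W. E u w \<and> w \<noteq> v1 \<longrightarrow> w \<in> zf_stage W E T n1" and
    n2: "v2 \<notin> zf_stage W E T n2" "\<forall>w\<in>W. E u w \<and> w \<noteq> v2 \<longrightarrow> w \<in> zf_stage W E T n2"
    unfolding forces_def by blast
  have "v1 \<in> W" "E u v1" "v2 \<in> W" "E u v2" using assms unfolding forces_def by blast+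
  hence in_other: "v2 \<in> zf_stage W E T n1" "v1 \<in> zf_stage W E T n2"
    using n1(2) n2(2) \<open>v1 \<noteq> v2\<close> by blast+
  consider "n1 \<le> n2" | "n2 \<le> n1" by linarith
  thus False
  proof cases
    case 1
    thus False using in_other(1) n2(1) monoD[OF mono_zf_stage[of W E T]] by blast
  next
    case 2
    thus False using in_other(2) n1(1) monoD[OF mono_zf_stage[of W E T]] by blast
  qed
qed

lemma card_forced_le:
  assumes "finite S" shows "card {v. \<exists>s\<in>S. forces W E T s v} \<le> card S"
proof -
  let ?f = "\<lambda>s. THE v. forces W E T s v"
  have "{v. \<exists>s\<in>S. forces W E T s v} \<subseteq> ?f ` S"
  proof
    fix v assume "v \<in> {v. \<exists>s\<in>S. forces W E T s v}"
    then obtain s where "s \<in> S" "forces W E T s v" by blast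
    moreover have "?f s = v" using \<open>forces W E T s v\<close> by (blast intro: the_equality forces_unique)
    ultimately show "v \<in> ?f ` S" by (metis image_eqI)
  qed
  hence "card {v. \<exists>s\<in>S. forces W E T s v} \<le> card (?f ` S)"
    using assms by (intro card_mono) auto
  also have "\<dots> \<le> card S" by (rule card_image_le[OF assms])
  finally show ?thesis .
qed

text \<open>Every force into a component \<open>C\<close> avoiding \<open>T\<close> is made either from inside \<open>C\<close>, and
can then be replayed in \<open>G[C]\<close>, or from \<open>S\<close>, and then its target is initially coloured in
\<open>G[C]\<close>.\<close>
lemma zf_stage_inter_component_subset:
  assumes "symp E" and C: "C \<in> components (V - S) E" and "C \<inter> T = {}"
  shows "zf_stage V E T n \<inter> C \<subseteq> zf_closure C E {v \<in> C. \<exists>s\<in>S. forces V E T s v}"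
proof (induction n)
  case 0
  then show ?case using \<open>C \<inter> T = {}\<close> by (auto simp: zf_stage_0)
next
  case (Suc n)
  let ?F = "{v \<in> C. \<exists>s\<in>S. forces V E T s v}"
  have "C \<subseteq> V - S" using C by (rule components_subset)
  show ?case
  proof
    fix v assume v: "v \<in> zf_stage V E T (Suc n) \<inter> C"
    show "v \<in> zf_closure C E ?F"
    proof (cases "v \<in> zf_stage V E T n")
      case True
      thus ?thesis using Suc v by blast
    next
      case False
      then obtain u where u: "u \<in> zf_stage V E T n" "E u v"
        "\<forall>w\<in>V. E u w \<and> w \<noteq> v \<longrightarrow> w \<in> zf_stage V E T n"
        using v unfolding zf_stage_Suc zf_step_def by blast
      show ?thesis
      proof (cases "u \<in> S")
        case True
        moreover have "forces V E T u v"
          unfolding forces_def using u v False \<open>C \<subseteq> V - S\<close> by blast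
        ultimately have "v \<in> ?F" using v by blast
        thus ?thesis using v by (blast intro: zf_closure.init)
      next
        case False
        have "E v u" using \<open>symp E\<close> u(2) by (simp add: symp_def)
        moreover have "u \<in> V - S" using u(1) zf_stage_subset[of V E T n] False by blast
        ultimately have "u \<in> C" using components_edge_closed[OF C] v by blast
        hence "u \<in> zf_closure C E ?F" using Suc u(1) by blast
        moreover have "\<forall>w\<in>C. E u w \<and> w \<noteq> v \<longrightarrow> w \<in> zf_closure C E ?F"
          using u(3) \<open>C \<subseteq> V - S\<close> Suc by blast
        ultimately show ?thesis using zf_closure.force[of u C E ?F v] u(2) v by blast
      qed
    qed
  qed
qed

lemma forced_from_separator_zero_forcing_component:
  assumes "symp E" "finite V"
    and zf: "zero_forcing_set V E T"
    and C: "C \<in> components (V - S) E" and "C \<inter> T = {}"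
  shows "zero_forcing_set C E {v \<in> C. \<exists>s\<in>S. forces V E T s v}"
proof -
  let ?F = "{v \<in> C. \<exists>s\<in>S. forces V E T s v}"
  have "C \<subseteq> zf_closure C E ?F"
  proof
    fix x assume "x \<in> C"
    hence "x \<in> zf_closure V E T"
      using zf components_subset[OF C] unfolding zero_forcing_set_def by blast
    then obtain n where "x \<in> zf_stage V E T n"
      using zf_closure_in_some_stage[OF \<open>finite V\<close>] by blast
    thus "x \<in> zf_closure C E ?F"
      using zf_stage_inter_component_subset[OF assms(1,4,5)] \<open>x \<in> C\<close> by blast
  qed
  thus ?thesis using zf_closure_subset[of C E ?F] unfolding zero_forcing_set_def by blast
qed

lemma Z_le_card:
  assumes "finite W" "zero_forcing_set W E T" shows "Z W E \<le> card T"
proof -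
  have "{card T | T. zero_forcing_set W E T} \<subseteq> card ` Pow W"
    unfolding zero_forcing_set_def by blast
  hence "finite {card T | T. zero_forcing_set W E T}"
    using assms(1) by (meson finite_Pow_iff finite_imageI finite_subset)
  thus ?thesis unfolding Z_def using assms(2) by (intro Min_le) auto
qed

lemma Z_uncoloured_component_le_card_separator:
  assumes "symp E" "finite V" "S \<subseteq> V"
    and "zero_forcing_set V E T"
    and C: "C \<in> components (V - S) E" and "C \<inter> T = {}"
  shows "Z C E \<le> card S"
proof -
  let ?F = "{v \<in> C. \<exists>s\<in>S. forces V E T s v}"
  have "finite C" using assms(2) components_subset[OF C] by (meson finite_Diff finite_subset)
  hence "Z C E \<le> card ?F"
    using forced_from_separator_zero_forcing_component[OF assms(1,2,4,5,6)] by (rule Z_le_card)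
  also have "\<dots> \<le> card {v. \<exists>s\<in>S. forces V E T s v}"
  proof (rule card_mono)
    show "finite {v. \<exists>s\<in>S. forces V E T s v}"
      using assms(2) by (rule finite_subset[rotated]) (auto simp: forces_def)
  qed blast
  also have "\<dots> \<le> card S" using assms(2,3) by (intro card_forced_le) (rule finite_subset)
  finally show ?thesis .
qed

lemma connected_forcing_set_meets_separator:
  assumes "symp E" "finite V" "S \<subseteq> V"
    and adj: "\<forall>s\<in>S. \<forall>C\<in>components (V - S) E. \<exists>v\<in>C. E s v"
    and T: "connected_forcing_set V E T"
    and k: "(card (components (V - S) E) = 2 \<and> (\<forall>C\<in>components (V - S) E. Z C E > card S))
            \<or> card (components (V - S) E) \<ge> 3"
  shows "T \<inter> S \<noteq> {}"
proof
  let ?K = "components (V - S) E"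
  assume "T \<inter> S = {}"
  with T have zf: "zero_forcing_set V E T" and "connected_on T E" "T \<subseteq> V - S"
    by (auto simp: connected_forcing_set_def zero_forcing_set_def)
  obtain C0 where C0: "{C \<in> ?K. C \<inter> T \<noteq> {}} = {C0}"
    by (rule connected_on_meets_one_component[OF \<open>symp E\<close> \<open>connected_on T E\<close> \<open>T \<subseteq> V - S\<close>])
  have "\<not> card ?K \<ge> 3"
    using zero_forcing_set_meets_all_but_one_component[OF \<open>symp E\<close> adj zf] C0 by simp
  with k have "card ?K = 2" and Z_gt: "\<forall>C\<in>?K. Z C E > card S" by auto
  hence "\<not> ?K \<subseteq> {C0}" using card_mono[of "{C0}" ?K] by auto
  then obtain C where C: "C \<in> ?K" "C \<noteq> C0" by blast
  with C0 have "C \<inter> T = {}" by blast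
  with C zf have "Z C E \<le> card S"
    using Z_uncoloured_component_le_card_separator[OF \<open>symp E\<close> \<open>finite V\<close> \<open>S \<subseteq> V\<close>] by blast
  moreover have "Z C E > card S" using Z_gt C(1) by blast
  ultimately show False by linarith
qed

theorem lemma1:
  fixes V S :: "'a set" and E :: "'a \<Rightarrow> 'a \<Rightarrow> bool"
  assumes "simple_graph V E"
    and "connected_on V E"
    and "separating V E S"
    and "\<forall>s\<in>S. \<forall>C\<in>components (V - S) E. \<exists>v\<in>C. E s v"
  shows "(\<forall>T. connected_forcing_set V E T \<longrightarrow>
           card {C \<in> components (V - S) E. C \<inter> T \<noteq> {}} \<ge> card (components (V - S) E) - 1)
         \<and> (((card (components (V - S) E) = 2 \<and> (\<forall>C\<in>components (V - S) E. Z C E > card S))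
               \<or> card (components (V - S) E) \<ge> 3) \<longrightarrow>
             (\<forall>T. connected_forcing_set V E T \<longrightarrow> T \<inter> S \<noteq> {}))"
proof -
  have "symp E" "finite V" using assms(1) by (auto simp: simple_graph_def symp_def)
  moreover have "S \<subseteq> V" using assms(3) by (simp add: separating_def)
  ultimately show ?thesis
    using zero_forcing_set_meets_all_but_one_component[OF _ assms(4)]
      connected_forcing_set_meets_separator[OF _ _ _ assms(4)]
    by (auto simp: connected_forcing_set_def)
qed

end
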